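(* Let $g(x)\in\mathbb{Z}[x]$ be irreducible in $\mathbb{Z}[x]$. If there is an odd integer $k$ with $g(k^2)\equiv 2\pmod 4$, then $g(x^2)$ is irreducible in $\mathbb{Z}[x]$.
   Context: Irreducibility is in the ring $\mathbb{Z}[x]$: a nonzero non-unit element is irreducible if it is not a product of two non-units. *)

theory Defs
  imports "HOL-Computational_Algebra.Polynomial_Factorial"
begin

end

theory Submission
  imports Defs
begin

text \<open>
  For a factor \<open>A\<close> of \<open>g(x\<^sup>2)\<close>, the product \<open>A(x) A(-x)\<close> is even in \<open>x\<close>, hence of the form
  \<open>N\<^sub>A(x\<^sup>2)\<close>. A factorisation \<open>g(x\<^sup>2) = A B\<close> gives \<open>N\<^sub>A N\<^sub>B = g\<^sup>2\<close>, so by irreducibility of \<open>g\<close>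
  either one norm is a unit, forcing the corresponding factor to be a unit, or some norm is a
  unit multiple of \<open>g\<close>. In the latter case \<open>A(k) A(-k) = \<plusminus>g(k\<^sup>2) \<equiv> 2 (mod 4)\<close>, which is
  impossible because \<open>A(k) \<equiv> A(-k) (mod 2)\<close>.
\<close>

lemma pcompose_square_eq_iff:
  fixes p q :: "'a::idom poly"
  shows "pcompose p [:0, 0, 1:] = pcompose q [:0, 0, 1:] \<longleftrightarrow> p = q"
proof
  assume "pcompose p [:0, 0, 1:] = pcompose q [:0, 0, 1:]"
  then have "pcompose (p - q) [:0, 0, 1:] = 0"
    by (simp only: pcompose_diff diff_self)
  then have "p - q = 0"
    by (rule pcompose_eq_0) simp
  then show "p = q"
    by simp
qed simp

lemma is_unit_pcompose: "p dvd 1 \<Longrightarrow> pcompose p q dvd 1"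
  for p q :: "'a::comm_ring_1 poly"
proof -
  assume "p dvd 1"
  then obtain r where "1 = p * r"
    by (rule dvdE)
  then have "1 = pcompose p q * pcompose r q"
    by (metis pcompose_1 pcompose_mult)
  then show ?thesis
    by (rule dvdI)
qed

lemma is_unit_pcompose_square_iff:
  fixes g :: "'a::idom poly"
  shows "pcompose g [:0, 0, 1:] dvd 1 \<longleftrightarrow> g dvd 1"
proof
  assume unit: "pcompose g [:0, 0, 1:] dvd 1"
  then obtain c where "pcompose g [:0, 0, 1:] = [:c:]"
    by (auto simp: is_unit_poly_iff)
  then have "degree g * 2 = 0"
    using degree_pcompose[of g "[:0, 0, 1:]"] by simp
  then have "pcompose g [:0, 0, 1:] = g"
    by (metis degree_0_id mult_is_0 pcompose_const zero_neq_numeral)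
  with unit show "g dvd 1"
    by simp
qed (rule is_unit_pcompose)

lemma poly_even_odd_decomp:
  fixes p :: "'a::comm_semiring_1 poly"
  shows "\<exists>e q. p = pcompose e [:0, 0, 1:] + [:0, 1:] * pcompose q [:0, 0, 1:]"
proof (induction p)
  case 0
  show ?case
    by (rule exI[of _ 0], rule exI[of _ 0]) simp
next
  case (pCons a p)
  then obtain e q where p: "p = pcompose e [:0, 0, 1:] + [:0, 1:] * pcompose q [:0, 0, 1:]"
    by blast
  have "pCons a p = [:a:] + [:0, 1:] * p"
    by (simp add: pCons_eq_iff)
  also have "\<dots> = pcompose (pCons a q) [:0, 0, 1:] + [:0, 1:] * pcompose e [:0, 0, 1:]"
    unfolding p pcompose_pCons by (simp add: algebra_simps)
  finally show ?case
    by blast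
qed

lemma pcompose_square_neg:
  "pcompose (pcompose p [:0, 0, 1:]) [:0, -1:] = pcompose p [:0, 0, 1::'a::comm_ring_1:]"
proof -
  have "pcompose [:0, 0, 1:] [:0, -1:] = [:0, 0, 1::'a:]"
    by (simp add: pcompose_pCons)
  then show ?thesis
    by (simp only: pcompose_assoc[symmetric])
qed

lemma ex_pcompose_square_eq_mult_pcompose_neg:
  fixes p :: "'a::comm_ring_1 poly"
  shows "\<exists>n. pcompose n [:0, 0, 1:] = p * pcompose p [:0, -1:]"
proof -
  obtain e q where p: "p = pcompose e [:0, 0, 1:] + [:0, 1:] * pcompose q [:0, 0, 1:]"
    using poly_even_odd_decomp by blast
  then have p_neg:
    "pcompose p [:0, -1:] = pcompose e [:0, 0, 1:] - [:0, 1:] * pcompose q [:0, 0, 1:]"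
    by (simp add: pcompose_add pcompose_mult pcompose_square_neg pcompose_pCons)
  have "p * pcompose p [:0, -1:] =
      (pcompose e [:0, 0, 1:] + [:0, 1:] * pcompose q [:0, 0, 1:]) *
      (pcompose e [:0, 0, 1:] - [:0, 1:] * pcompose q [:0, 0, 1:])"
    unfolding p_neg using p by simp
  also have "\<dots> = pcompose (e * e - [:0, 1:] * q * q) [:0, 0, 1:]"
    by (simp add: pcompose_diff pcompose_mult pcompose_pCons algebra_simps)
  finally show ?thesis
    by (metis (no_types))
qed

lemma two_dvd_poly_minus_poly_neg:
  fixes p :: "'a::comm_ring_1 poly"
  shows "2 dvd poly p x - poly p (-x)"
proof -
  obtain e q where p: "p = pcompose e [:0, 0, 1:] + [:0, 1:] * pcompose q [:0, 0, 1:]"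
    using poly_even_odd_decomp by blast
  have "poly p x - poly p (-x) = 2 * (x * poly q (x * x))"
    by (simp add: p poly_pcompose algebra_simps)
  then show ?thesis
    by simp
qed

lemma mult_mod_4_neq_2:
  fixes a b :: int
  assumes "even (a - b)"
  shows "a * b mod 4 \<noteq> 2"
proof
  assume "a * b mod 4 = 2"
  then have "even a \<or> even b"
    by (metis even_mult_iff mod_mod_cancel dvd_mod_iff even_numeral numeral_Bit0_div_2 dvd_refl)
  with assms have "even a" "even b"
    by auto
  then obtain x y where "a = 2 * x" "b = 2 * y"
    by (elim evenE)
  with \<open>a * b mod 4 = 2\<close> show False
    by simp
qed

lemma poly_norm_mod_4_neq_2:
  fixes n p :: "int poly"
  assumes "pcompose n [:0, 0, 1:] = p * pcompose p [:0, -1:]"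
  shows "poly n (k ^ 2) mod 4 \<noteq> 2"
proof -
  have "poly n (k ^ 2) = poly p k * poly p (-k)"
    using arg_cong[OF assms, of "\<lambda>r. poly r k"] by (simp add: poly_pcompose power2_eq_square)
  moreover have "even (poly p k - poly p (-k))"
    by (rule two_dvd_poly_minus_poly_neg)
  ultimately show ?thesis
    using mult_mod_4_neq_2 by metis
qed

lemma is_unit_cofactor_of_dvd_norm:
  fixes g m n p q :: "int poly"
  assumes "irreducible g" and g_mod_4: "poly g (k ^ 2) mod 4 = 2"
    and m: "pcompose m [:0, 0, 1:] = p * pcompose p [:0, -1:]"
    and n: "pcompose n [:0, 0, 1:] = q * pcompose q [:0, -1:]"
    and "g * g = m * n" and "g dvd m"
  shows "q dvd 1"
proof -
  obtain c where c: "m = g * c"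
    using \<open>g dvd m\<close> by blast
  have "g \<noteq> 0"
    using \<open>irreducible g\<close> by auto
  with \<open>g * g = m * n\<close> have "g = c * n"
    by (simp add: c mult.assoc)
  with \<open>irreducible g\<close> have "c dvd 1 \<or> n dvd 1"
    by (rule irreducibleD)
  moreover have "\<not> c dvd 1"
  proof
    assume "c dvd 1"
    then obtain u where "c = [:u:]" "u dvd 1"
      by (auto simp: is_unit_poly_iff)
    then have "c = 1 \<or> c = -1"
      using zdvd1_eq[of u] by (auto simp: one_pCons abs_eq_iff)
    with g_mod_4 have "poly m (k ^ 2) mod 4 = 2"
      by (auto simp: c) presburger
    with poly_norm_mod_4_neq_2[OF m] show False
      by blast
  qed
  ultimately have "pcompose n [:0, 0, 1:] dvd 1"
    by (simp add: is_unit_pcompose)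
  then show "q dvd 1"
    by (simp add: n is_unit_mult_iff)
qed

theorem lemma3:
  fixes g :: "int poly" and k :: int
  assumes "irreducible g"
    and "odd k"
    and "poly g (k ^ 2) mod 4 = 2"
  shows "irreducible (pcompose g [:0, 0, 1:])"
proof (rule irreducibleI)
  show "pcompose g [:0, 0, 1:] \<noteq> 0"
    using \<open>irreducible g\<close> by (auto dest: pcompose_eq_0)
  show "\<not> pcompose g [:0, 0, 1:] dvd 1"
    using \<open>irreducible g\<close> by (simp add: is_unit_pcompose_square_iff irreducible_not_unit)
next
  fix p q
  assume pq: "pcompose g [:0, 0, 1:] = p * q"
  obtain m where m: "pcompose m [:0, 0, 1:] = p * pcompose p [:0, -1:]"
    using ex_pcompose_square_eq_mult_pcompose_neg by blast
  obtain n where n: "pcompose n [:0, 0, 1:] = q * pcompose q [:0, -1:]"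
    using ex_pcompose_square_eq_mult_pcompose_neg by blast
  have "pcompose (m * n) [:0, 0, 1:] = (p * q) * pcompose (p * q) [:0, -1:]"
    by (simp add: pcompose_mult m n ac_simps)
  also have "\<dots> = pcompose (g * g) [:0, 0, 1:]"
    by (simp only: pq[symmetric] pcompose_square_neg pcompose_mult)
  finally have "g * g = m * n"
    by (simp add: pcompose_square_eq_iff)
  moreover have "prime_elem g"
    using \<open>irreducible g\<close> by (simp add: prime_elem_iff_irreducible)
  ultimately have "g dvd m \<or> g dvd n"
    by (metis dvd_triv_left prime_elem_dvd_mult_iff)
  then show "p dvd 1 \<or> q dvd 1"
    using is_unit_cofactor_of_dvd_norm[OF \<open>irreducible g\<close> assms(3)] m n \<open>g * g = m * n\<close>
    by (metis mult.commute)
qed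

end
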